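(* Let $n\ge2$, let $A=(a_{ij})$ be an $n\times n$ nonnegative irreducible matrix and $c=(c_1,\dots,c_n)^T$ a vector with all components positive. For $1\le i\le n$ put \[M_i=\frac{1}{c_i}\sum_{j=1}^n a_{ij}c_j,\qquad S=\min_{1\le i\le n}a_{ii},\qquad T=\min_{i\ne j}\frac{a_{ij}c_j}{c_i},\] and assume $M_1\ge M_2\ge\cdots\ge M_n$. Then \[\rho(A)\ge \frac{M_n+S-T+\sqrt{(M_n-S+T)^2+4T\sum_{k=1}^{n-1}(M_k-M_n)}}{2}.\] Equality holds if and only if $M_1=\cdots=M_n$, or $T>0$ and for some $2\le t\le n$: (i) $a_{kk}=S$ for $1\le k\le t-1$; (ii) $\frac{a_{kl}c_l}{c_k}=T$ for all $1\le k\le n$, $1\le l\le t-1$, $k\ne l$; (iii) $M_t=\cdots=M_n$.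
   Context: $\rho(A)$ denotes the spectral radius of $A$. *)

theory Defs
  imports "Jordan_Normal_Form.Spectral_Radius"
begin

definition nonneg_mat :: "real mat \<Rightarrow> bool" where
  "nonneg_mat A \<longleftrightarrow> (\<forall>i < dim_row A. \<forall>j < dim_col A. A $$ (i,j) \<ge> 0)"

text \<open>Directed graph of a square matrix: edge i -> j iff a_ij is nonzero.
  A (nonnegative) n x n matrix with n >= 2 is irreducible iff this graph is strongly connected.\<close>
definition mat_graph :: "real mat \<Rightarrow> (nat \<times> nat) set" where
  "mat_graph A = {(i,j). i < dim_row A \<and> j < dim_col A \<and> A $$ (i,j) \<noteq> 0}"

definition irreducible_mat :: "real mat \<Rightarrow> bool" where
  "irreducible_mat A \<longleftrightarrow>
     (\<forall>i < dim_row A. \<forall>j < dim_row A. i \<noteq> j \<longrightarrow> (i,j) \<in> (mat_graph A)\<^sup>+)"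

definition rho :: "real mat \<Rightarrow> real" where
  "rho A = spectral_radius (map_mat complex_of_real A)"

text \<open>Weighted row sums M_i = (1/c_i) sum_j a_ij c_j  (0-based indices).\<close>
definition Mrow :: "real mat \<Rightarrow> (nat \<Rightarrow> real) \<Rightarrow> nat \<Rightarrow> real" where
  "Mrow A c i = (\<Sum>j < dim_col A. A $$ (i,j) * c j) / c i"

definition Sdiag :: "real mat \<Rightarrow> real" where
  "Sdiag A = Min {A $$ (i,i) | i. i < dim_row A}"

definition Toff :: "real mat \<Rightarrow> (nat \<Rightarrow> real) \<Rightarrow> real" where
  "Toff A c = Min {A $$ (i,j) * c j / c i | i j. i < dim_row A \<and> j < dim_row A \<and> i \<noteq> j}"

end

theory Submission
  imports Defs
begin

text \<open>
  Let b_ij = a_ij c_j / c_i, so that M_i = sum_j b_ij, put d_j = M_j - M_n >= 0, and let r0 be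
  the claimed bound, the larger root of (x - S + T)(x - M_n) = T sum_k d_k. For the vector
  y_j = c_j (r0 - S + T + d_j) this quadratic relation yields
  (A y - r0 y)_i = c_i sum_j (b_ij - e_ij) d_j, where e_ii = S and e_ij = T otherwise,
  a sum of nonnegative terms. If T > 0 then y > 0, so rho(A) >= r0 (Collatz--Wielandt), and
  for irreducible A equality holds iff A y = r0 y, i.e. iff every column j with d_j > 0 of
  (b_ij) coincides with that of (e_ij). Since d decreases, these columns form an initial
  segment, which is the stated equality pattern. If T = 0 then r0 = M_n and y = c serves
  instead.

  The Collatz--Wielandt facts are proved directly: A y >= r y with y > 0 gives r <= rho(A),
  because for rho(A) < m < r the powers of A/m stay bounded while (A/m)^k y >= (r/m)^k y;
  and for irreducible A a strict inequality in one row spreads to all rows by perturbing y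
  along edges of the graph of A, which gives r < rho(A).
\<close>

lemma nonneg_matD:
  assumes "A \<in> carrier_mat n n" "nonneg_mat A" "i < n" "j < n"
  shows "0 \<le> A $$ (i,j)"
  using assms unfolding nonneg_mat_def by auto

lemma row_sum_mult_mat:
  assumes "P \<in> carrier_mat n n" "B \<in> carrier_mat n n" "i < n"
  shows "(\<Sum>j<n. (P * B) $$ (i,j) * y j) = (\<Sum>l<n. P $$ (i,l) * (\<Sum>j<n. B $$ (l,j) * y j))"
proof -
  have "(\<Sum>j<n. (P * B) $$ (i,j) * y j) = (\<Sum>j<n. \<Sum>l<n. P $$ (i,l) * B $$ (l,j) * y j)"
    using assms by (auto simp: scalar_prod_def atLeast0LessThan sum_distrib_right intro!: sum.cong)
  also have "\<dots> = (\<Sum>l<n. P $$ (i,l) * (\<Sum>j<n. B $$ (l,j) * y j))"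
    by (subst sum.swap) (simp add: sum_distrib_left mult.assoc)
  finally show ?thesis .
qed

lemma nonneg_mat_mult:
  assumes "P \<in> carrier_mat n n" "B \<in> carrier_mat n n" "nonneg_mat P" "nonneg_mat B"
  shows "nonneg_mat (P * B)"
  using assms unfolding nonneg_mat_def
  by (auto simp: scalar_prod_def intro!: sum_nonneg mult_nonneg_nonneg)

lemma nonneg_mat_pow:
  assumes "B \<in> carrier_mat n n" "nonneg_mat B"
  shows "nonneg_mat (B ^\<^sub>m k)"
proof (induction k)
  case 0
  show ?case by (auto simp: nonneg_mat_def one_mat_def)
next
  case (Suc k)
  then show ?case using assms by (simp add: nonneg_mat_mult[of _ n])
qed

lemma nonneg_mat_pow_subinvariant:
  assumes B: "B \<in> carrier_mat n n" and nonneg: "nonneg_mat B" and "0 \<le> r"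
    and sub: "\<forall>i<n. r * y i \<le> (\<Sum>j<n. B $$ (i,j) * y j)"
  shows "\<forall>i<n. r ^ k * y i \<le> (\<Sum>j<n. (B ^\<^sub>m k) $$ (i,j) * y j)"
proof (induction k)
  case 0
  have "(\<Sum>j<n. (1\<^sub>m n :: real mat) $$ (i,j) * y j) = y i" if "i < n" for i
  proof -
    have "(\<Sum>j<n. (1\<^sub>m n :: real mat) $$ (i,j) * y j) = (\<Sum>j<n. if j = i then y j else 0)"
      using that by (intro sum.cong) auto
    then show ?thesis using that by simp
  qed
  then show ?case using B by simp
next
  case (Suc k)
  show ?case
  proof (intro allI impI)
    fix i assume i: "i < n"
    have Bk: "B ^\<^sub>m k \<in> carrier_mat n n" using B by simp
    have "r ^ Suc k * y i = r * (r ^ k * y i)" by simp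
    also have "\<dots> \<le> r * (\<Sum>l<n. (B ^\<^sub>m k) $$ (i,l) * y l)"
      using Suc i \<open>0 \<le> r\<close> by (simp add: mult_left_mono)
    also have "\<dots> = (\<Sum>l<n. (B ^\<^sub>m k) $$ (i,l) * (r * y l))"
      by (simp add: sum_distrib_left algebra_simps)
    also have "\<dots> \<le> (\<Sum>l<n. (B ^\<^sub>m k) $$ (i,l) * (\<Sum>j<n. B $$ (l,j) * y j))"
      using sub nonneg_matD[OF Bk nonneg_mat_pow[OF B nonneg] i]
      by (auto intro!: sum_mono mult_left_mono)
    also have "\<dots> = (\<Sum>j<n. (B ^\<^sub>m Suc k) $$ (i,j) * y j)"
      using row_sum_mult_mat[OF Bk B i] by simp
    finally show "r ^ Suc k * y i \<le> (\<Sum>j<n. (B ^\<^sub>m Suc k) $$ (i,j) * y j)" .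
  qed
qed

lemma smult_mat_mult_mat_vec:
  assumes "B \<in> carrier_mat n n" "v \<in> carrier_vec n"
  shows "(k \<cdot>\<^sub>m B) *\<^sub>v v = k \<cdot>\<^sub>v (B *\<^sub>v v)"
  using assms by (intro eq_vecI) (auto simp: scalar_prod_def sum_distrib_left mult.assoc)

lemma eigenvalue_smult_mat:
  fixes B :: "'a::field mat"
  assumes B: "B \<in> carrier_mat n n" and k: "k \<noteq> 0" and ev: "eigenvalue (k \<cdot>\<^sub>m B) e"
  shows "eigenvalue B (e / k)"
proof -
  from ev obtain v where v: "v \<in> carrier_vec n" "v \<noteq> 0\<^sub>v n" "(k \<cdot>\<^sub>m B) *\<^sub>v v = e \<cdot>\<^sub>v v"
    unfolding eigenvalue_def eigenvector_def using B by auto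
  have "B *\<^sub>v v = (1 / k) \<cdot>\<^sub>v ((k \<cdot>\<^sub>m B) *\<^sub>v v)"
    using k by (simp add: smult_mat_mult_mat_vec[OF B v(1)] smult_smult_assoc)
  also have "\<dots> = (e / k) \<cdot>\<^sub>v v"
    by (simp add: v(3) smult_smult_assoc)
  finally show ?thesis
    unfolding eigenvalue_def eigenvector_def using v B by auto
qed

lemma spectral_radius_smult_mat_le:
  assumes B: "B \<in> carrier_mat n n" and n: "0 < n" and k: "k \<noteq> 0"
  shows "spectral_radius (k \<cdot>\<^sub>m B) \<le> norm k * spectral_radius B"
proof -
  obtain e where e: "eigenvalue (k \<cdot>\<^sub>m B) e" and sr: "spectral_radius (k \<cdot>\<^sub>m B) = norm e"
    using spectral_radius_mem_max(1)[of "k \<cdot>\<^sub>m B" n] B n unfolding spectrum_def by auto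
  have "norm (e / k) \<le> spectral_radius B"
    using spectral_radius_mem_max(2)[OF B n] eigenvalue_smult_mat[OF B k e]
    unfolding spectrum_def by auto
  then show ?thesis
    using sr k by (simp add: norm_divide field_simps)
qed

lemma rho_nonneg:
  assumes "A \<in> carrier_mat n n" "0 < n"
  shows "0 \<le> rho A"
  using spectral_radius_mem_max(1)[of "map_mat complex_of_real A" n] assms
  unfolding rho_def by auto

lemma rho_smult_mat_le:
  assumes "A \<in> carrier_mat n n" "0 < n" "a \<noteq> 0"
  shows "rho (a \<cdot>\<^sub>m A) \<le> \<bar>a\<bar> * rho A"
proof -
  have "map_mat complex_of_real (a \<cdot>\<^sub>m A) = complex_of_real a \<cdot>\<^sub>m map_mat complex_of_real A"
    by (rule eq_matI) auto
  then show ?thesis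
    using spectral_radius_smult_mat_le[of "map_mat complex_of_real A" n "complex_of_real a"] assms
    unfolding rho_def by simp
qed

lemma bounded_pow_of_rho_less_1:
  assumes A: "A \<in> carrier_mat n n" and "rho A < 1"
  obtains b where "\<And>k i j. i < n \<Longrightarrow> j < n \<Longrightarrow> (A ^\<^sub>m k) $$ (i,j) \<le> b"
proof -
  obtain b where b: "\<And>k. norm_bound (map_mat complex_of_real A ^\<^sub>m k) b"
    using spectral_radius_jnf_norm_bound_less_1_upper_triangular[of "map_mat complex_of_real A" n]
      assms unfolding rho_def by auto
  have "(A ^\<^sub>m k) $$ (i,j) \<le> b" if "i < n" "j < n" for k i j
  proof -
    have "map_mat complex_of_real (A ^\<^sub>m k) = map_mat complex_of_real A ^\<^sub>m k"
      using of_real_hom.mat_hom_pow[OF A] .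
    then show ?thesis
      using b[of k] that A unfolding norm_bound_def by (metis abs_le_D1 index_map_mat(1,2,3)
        norm_of_real pow_carrier_mat carrier_matD)
  qed
  then show ?thesis using that by blast
qed

lemma subinvariant_le_1_of_rho_less_1:
  assumes A: "A \<in> carrier_mat n n" and n: "0 < n" and nonneg: "nonneg_mat A" and rho: "rho A < 1"
    and y: "\<forall>i<n. 0 < y i" and sub: "\<forall>i<n. r * y i \<le> (\<Sum>j<n. A $$ (i,j) * y j)"
  shows "r \<le> 1"
proof (rule ccontr)
  assume "\<not> r \<le> 1"
  then have r: "1 < r" by simp
  obtain b where b: "\<And>k i j. i < n \<Longrightarrow> j < n \<Longrightarrow> (A ^\<^sub>m k) $$ (i,j) \<le> b"
    using bounded_pow_of_rho_less_1[OF A rho] by blast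
  have "r ^ k * y 0 \<le> (\<Sum>j<n. b * y j)" for k
  proof -
    have "r ^ k * y 0 \<le> (\<Sum>j<n. (A ^\<^sub>m k) $$ (0,j) * y j)"
      using nonneg_mat_pow_subinvariant[OF A nonneg _ sub] r n by auto
    also have "\<dots> \<le> (\<Sum>j<n. b * y j)"
      using b y n by (auto intro!: sum_mono mult_right_mono simp: less_imp_le)
    finally show ?thesis .
  qed
  moreover obtain k where "(\<Sum>j<n. b * y j) / y 0 < r ^ k"
    using real_arch_pow[OF r] by blast
  ultimately show False
    using y n by (metis divide_less_eq leD)
qed

theorem rho_ge_of_subinvariant:
  assumes A: "A \<in> carrier_mat n n" and n: "0 < n" and nonneg: "nonneg_mat A"
    and y: "\<forall>i<n. 0 < y i" and sub: "\<forall>i<n. r * y i \<le> (\<Sum>j<n. A $$ (i,j) * y j)"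
  shows "r \<le> rho A"
proof (rule dense_ge)
  fix m assume m: "rho A < m"
  then have "0 < m" using rho_nonneg[OF A n] by linarith
  let ?B = "(1 / m) \<cdot>\<^sub>m A"
  have B: "?B \<in> carrier_mat n n" using A by simp
  have "rho ?B \<le> rho A / m" using rho_smult_mat_le[OF A n, of "1 / m"] \<open>0 < m\<close> by simp
  also have "\<dots> < 1" using m \<open>0 < m\<close> by simp
  finally have "rho ?B < 1" .
  moreover have "nonneg_mat ?B" using nonneg \<open>0 < m\<close> unfolding nonneg_mat_def by auto
  moreover have "\<forall>i<n. r / m * y i \<le> (\<Sum>j<n. ?B $$ (i,j) * y j)"
  proof (intro allI impI)
    fix i assume i: "i < n"
    have "(\<Sum>j<n. ?B $$ (i,j) * y j) = (\<Sum>j<n. A $$ (i,j) * y j) / m"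
      using A i by (auto simp: sum_divide_distrib intro!: sum.cong)
    then show "r / m * y i \<le> (\<Sum>j<n. ?B $$ (i,j) * y j)"
      using sub i \<open>0 < m\<close> by (simp add: divide_right_mono)
  qed
  ultimately have "r / m \<le> 1" using subinvariant_le_1_of_rho_less_1[OF B n] y by blast
  then show "r \<le> m" using \<open>0 < m\<close> by simp
qed

lemma max_ratio_attained:
  fixes f y :: "nat \<Rightarrow> real"
  assumes "0 < n" and y: "\<forall>j<n. 0 < y j"
  obtains s i where "i < n" "\<forall>j<n. f j \<le> s * y j" "f i = s * y i"
proof -
  define s where "s = Max ((\<lambda>j. f j / y j) ` {..<n})"
  have "s \<in> (\<lambda>j. f j / y j) ` {..<n}"
    unfolding s_def using \<open>0 < n\<close> by (intro Max_in) auto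
  then obtain i where i: "i < n" "s = f i / y i" by auto
  have "f j \<le> s * y j" if "j < n" for j
  proof -
    have "f j / y j \<le> s" unfolding s_def using that by simp
    then show ?thesis using y that by (simp add: divide_le_eq)
  qed
  moreover have "f i = s * y i" using i y by auto
  ultimately show ?thesis using that i(1) by blast
qed

theorem rho_le_of_superinvariant:
  assumes A: "A \<in> carrier_mat n n" and n: "0 < n" and nonneg: "nonneg_mat A"
    and y: "\<forall>i<n. 0 < y i" and super: "\<forall>i<n. (\<Sum>j<n. A $$ (i,j) * y j) \<le> r * y i"
  shows "rho A \<le> r"
proof -
  let ?Ac = "map_mat complex_of_real A"
  have Ac: "?Ac \<in> carrier_mat n n" using A by simp
  obtain e v where rho: "rho A = norm e" and v: "v \<in> carrier_vec n" "v \<noteq> 0\<^sub>v n"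
    and ev: "?Ac *\<^sub>v v = e \<cdot>\<^sub>v v"
    using spectral_radius_mem_max(1)[OF Ac n] Ac
    unfolding rho_def spectrum_def eigenvalue_def eigenvector_def by auto
  obtain s i where i: "i < n" and v_le: "\<forall>j<n. norm (v $ j) \<le> s * y j"
    and v_i: "norm (v $ i) = s * y i"
    using max_ratio_attained[OF n y, of "\<lambda>j. norm (v $ j)"] by blast
  have "norm (v $ i) \<noteq> 0"
  proof
    assume "norm (v $ i) = 0"
    then have "s = 0" using v_i y i by auto
    then have "v $ j = 0" if "j < n" for j using v_le that by simp
    then show False using v by (auto intro: eq_vecI)
  qed
  then have "0 < s * y i" by (simp flip: v_i)
  then have "0 < s" using y i by (auto simp: zero_less_mult_iff)
  have "norm e * norm (v $ i) = norm (\<Sum>j<n. complex_of_real (A $$ (i,j)) * v $ j)"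
    using arg_cong[OF ev, of "\<lambda>w. w $ i"] i A v(1)
    by (simp add: scalar_prod_def atLeast0LessThan norm_mult)
  also have "\<dots> \<le> (\<Sum>j<n. norm (complex_of_real (A $$ (i,j)) * v $ j))"
    by (rule norm_sum)
  also have "\<dots> = (\<Sum>j<n. A $$ (i,j) * norm (v $ j))"
    using nonneg_matD[OF A nonneg i] by (auto simp: norm_mult intro!: sum.cong)
  also have "\<dots> \<le> (\<Sum>j<n. A $$ (i,j) * (s * y j))"
    using v_le nonneg_matD[OF A nonneg i] by (auto intro!: sum_mono mult_left_mono)
  also have "\<dots> = s * (\<Sum>j<n. A $$ (i,j) * y j)"
    by (simp add: sum_distrib_left algebra_simps)
  also have "\<dots> \<le> r * norm (v $ i)"
    using super i \<open>0 < s\<close> v_i by (simp add: mult_left_mono mult.left_commute)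
  finally show ?thesis
    using rho \<open>norm (v $ i) \<noteq> 0\<close> by (simp add: mult_le_cancel_right)
qed

definition strict_rows :: "real mat \<Rightarrow> nat \<Rightarrow> real \<Rightarrow> (nat \<Rightarrow> real) \<Rightarrow> nat set" where
  "strict_rows A n r y = {i. i < n \<and> r * y i < (\<Sum>j<n. A $$ (i,j) * y j)}"

lemma irreducible_mat_edge_into:
  assumes A: "A \<in> carrier_mat n n" and irr: "irreducible_mat A"
    and out: "u0 < n" "u0 \<notin> P" and into: "v0 < n" "v0 \<in> P"
  obtains u v where "u < n" "v < n" "u \<notin> P" "v \<in> P" "A $$ (u,v) \<noteq> 0"
proof -
  have "\<exists>u v. u < n \<and> v < n \<and> u \<notin> P \<and> v \<in> P \<and> A $$ (u,v) \<noteq> 0"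
    if "(u0, w) \<in> (mat_graph A)\<^sup>+" "w \<in> P" for w
    using that
  proof (induction rule: trancl_induct)
    case (base w)
    then show ?case using out A unfolding mat_graph_def by auto
  next
    case (step w x)
    show ?case
    proof (cases "w \<in> P")
      case True
      then show ?thesis using step.IH by blast
    next
      case False
      then show ?thesis using step.hyps(2) step.prems A unfolding mat_graph_def by auto
    qed
  qed
  moreover have "(u0, v0) \<in> (mat_graph A)\<^sup>+"
    using irr A out into unfolding irreducible_mat_def by auto
  ultimately show ?thesis using that into by blast
qed

definition residual :: "real mat \<Rightarrow> nat \<Rightarrow> real \<Rightarrow> (nat \<Rightarrow> real) \<Rightarrow> nat \<Rightarrow> real" where
  "residual A n r y i = (\<Sum>j<n. A $$ (i,j) * y j) - r * y i"

lemma residual_fun_upd_add: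
  assumes "v < n"
  shows "residual A n r (y(v := y v + d)) i
    = residual A n r y i + d * (A $$ (i,v) - (if i = v then r else 0))"
proof -
  have "(\<Sum>j<n. A $$ (i,j) * (y(v := y v + d)) j)
      = (\<Sum>j<n. A $$ (i,j) * y j + (if j = v then A $$ (i,j) * d else 0))"
    by (intro sum.cong) (auto simp: algebra_simps)
  also have "\<dots> = (\<Sum>j<n. A $$ (i,j) * y j) + A $$ (i,v) * d"
    using assms by (simp add: sum.distrib)
  finally show ?thesis
    unfolding residual_def by (cases "i = v") (simp_all add: algebra_simps)
qed

text \<open>Raising y_v slightly at a strict row v keeps row v strict and makes every row with an
  edge into v strict.\<close>

lemma subinvariant_enlarge_strict_rows:
  assumes A: "A \<in> carrier_mat n n" and nonneg: "nonneg_mat A"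
    and y: "\<forall>i<n. 0 < y i" and sub: "\<forall>i<n. r * y i \<le> (\<Sum>j<n. A $$ (i,j) * y j)"
    and u: "u \<notin> strict_rows A n r y" and v: "v \<in> strict_rows A n r y"
    and edge: "A $$ (u,v) \<noteq> 0" and "u < n"
  obtains z where "\<forall>i<n. 0 < z i" "\<forall>i<n. r * z i \<le> (\<Sum>j<n. A $$ (i,j) * z j)"
    "insert u (strict_rows A n r y) \<subseteq> strict_rows A n r z"
proof -
  let ?res = "residual A n r"
  have strict_res: "strict_rows A n r x = {i. i < n \<and> 0 < ?res x i}" for x
    unfolding strict_rows_def residual_def by auto
  have res_y: "0 \<le> ?res y i" if "i < n" for i using sub that unfolding residual_def by simp
  have "v < n" "0 < ?res y v" using v unfolding strict_res by auto
  define d where "d = ?res y v / (\<bar>r - A $$ (v,v)\<bar> + 1)"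
  have "0 < d" using \<open>0 < ?res y v\<close> unfolding d_def by (simp add: add_nonneg_pos)
  have "d * (r - A $$ (v,v)) \<le> d * \<bar>r - A $$ (v,v)\<bar>"
    using \<open>0 < d\<close> by (simp add: mult_left_mono)
  also have "\<dots> < ?res y v"
    using \<open>0 < d\<close> \<open>0 < ?res y v\<close> unfolding d_def by (simp add: field_simps)
  finally have d_small: "d * (r - A $$ (v,v)) < ?res y v" .
  define z where "z = y(v := y v + d)"
  note res_z = residual_fun_upd_add[OF \<open>v < n\<close>, of A r y d, folded z_def]
  have res_z_v: "0 < ?res z v" using res_z[of v] d_small by (simp add: algebra_simps)
  have res_z_other: "?res y i \<le> ?res z i" if "i < n" "i \<noteq> v" for i
    using res_z[of i] that \<open>0 < d\<close> nonneg_matD[OF A nonneg _ \<open>v < n\<close>] by simp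
  have "u \<noteq> v" "0 < A $$ (u,v)"
    using u v edge nonneg_matD[OF A nonneg \<open>u < n\<close> \<open>v < n\<close>] by auto
  then have res_z_u: "0 < ?res z u"
    using res_z[of u] res_y[OF \<open>u < n\<close>] \<open>0 < d\<close> by (simp add: add_nonneg_pos)
  show ?thesis
  proof
    show "\<forall>i<n. 0 < z i" using y \<open>0 < d\<close> unfolding z_def by (simp add: add_pos_pos)
    show "\<forall>i<n. r * z i \<le> (\<Sum>j<n. A $$ (i,j) * z j)"
    proof (intro allI impI)
      fix i assume "i < n"
      then have "0 \<le> ?res z i"
        using res_z_v res_z_other[of i] res_y[of i] by (cases "i = v") auto
      then show "r * z i \<le> (\<Sum>j<n. A $$ (i,j) * z j)" unfolding residual_def by simp
    qed
    show "insert u (strict_rows A n r y) \<subseteq> strict_rows A n r z"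
      unfolding strict_res using res_z_u res_z_v res_z_other \<open>u < n\<close> by (auto intro: less_le_trans)
  qed
qed

lemma strictly_subinvariant_exists:
  assumes A: "A \<in> carrier_mat n n" and nonneg: "nonneg_mat A" and irr: "irreducible_mat A"
  shows "(\<forall>i<n. 0 < y i) \<Longrightarrow> (\<forall>i<n. r * y i \<le> (\<Sum>j<n. A $$ (i,j) * y j))
    \<Longrightarrow> strict_rows A n r y \<noteq> {}
    \<Longrightarrow> \<exists>z. (\<forall>i<n. 0 < z i) \<and> strict_rows A n r z = {..<n}"
proof (induction "n - card (strict_rows A n r y)" arbitrary: y rule: less_induct)
  case less
  have rows_n: "strict_rows A n r x \<subseteq> {..<n}" for x by (auto simp: strict_rows_def)
  show ?case
  proof (cases "strict_rows A n r y = {..<n}")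
    case True
    then show ?thesis using less.prems by blast
  next
    case False
    then obtain u0 where "u0 < n" "u0 \<notin> strict_rows A n r y" using rows_n by blast
    moreover obtain v0 where "v0 \<in> strict_rows A n r y" using less.prems(3) by blast
    moreover then have "v0 < n" by (simp add: strict_rows_def)
    ultimately obtain u v where uv: "u < n" "u \<notin> strict_rows A n r y" "v \<in> strict_rows A n r y"
      "A $$ (u,v) \<noteq> 0"
      using irreducible_mat_edge_into[OF A irr] by metis
    obtain z where z: "\<forall>i<n. 0 < z i" "\<forall>i<n. r * z i \<le> (\<Sum>j<n. A $$ (i,j) * z j)"
      "insert u (strict_rows A n r y) \<subseteq> strict_rows A n r z"
      using subinvariant_enlarge_strict_rows[OF A nonneg less.prems(1,2) uv(2,3,4,1)] by blast
    have "card (strict_rows A n r y) < card (strict_rows A n r z)"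
      using z(3) uv(2) rows_n by (intro psubset_card_mono) (auto intro: finite_subset)
    moreover have "card (strict_rows A n r z) \<le> n"
      using card_mono[OF _ rows_n] by simp
    ultimately have "n - card (strict_rows A n r z) < n - card (strict_rows A n r y)"
      by linarith
    moreover have "strict_rows A n r z \<noteq> {}" using z(3) by blast
    ultimately show ?thesis using less.hyps[of z] z(1,2) by blast
  qed
qed

theorem rho_gt_of_subinvariant:
  assumes A: "A \<in> carrier_mat n n" and n: "0 < n" and nonneg: "nonneg_mat A"
    and irr: "irreducible_mat A"
    and y: "\<forall>i<n. 0 < y i" and sub: "\<forall>i<n. r * y i \<le> (\<Sum>j<n. A $$ (i,j) * y j)"
    and strict: "strict_rows A n r y \<noteq> {}"
  shows "r < rho A"
proof -
  obtain z where z: "\<forall>i<n. 0 < z i" "strict_rows A n r z = {..<n}"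
    using strictly_subinvariant_exists[OF A nonneg irr y sub strict] by blast
  define e where "e = Min ((\<lambda>i. ((\<Sum>j<n. A $$ (i,j) * z j) - r * z i) / z i) ` {..<n})"
  have excess_pos: "0 < ((\<Sum>j<n. A $$ (i,j) * z j) - r * z i) / z i" if "i < n" for i
  proof -
    have "i \<in> strict_rows A n r z" using z(2) that by simp
    then show ?thesis using z(1) that by (simp add: strict_rows_def)
  qed
  have "0 < e" unfolding e_def using n excess_pos by (subst Min_gr_iff) auto
  have "(r + e) * z i \<le> (\<Sum>j<n. A $$ (i,j) * z j)" if "i < n" for i
  proof -
    have "e \<le> ((\<Sum>j<n. A $$ (i,j) * z j) - r * z i) / z i" unfolding e_def using that by simp
    then show ?thesis using z(1) that by (simp add: le_divide_eq algebra_simps)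
  qed
  then have "r + e \<le> rho A" using rho_ge_of_subinvariant[OF A n nonneg z(1)] by blast
  then show ?thesis using \<open>0 < e\<close> by simp
qed

theorem rho_eq_iff_invariant:
  assumes A: "A \<in> carrier_mat n n" and n: "0 < n" and nonneg: "nonneg_mat A"
    and irr: "irreducible_mat A"
    and y: "\<forall>i<n. 0 < y i" and sub: "\<forall>i<n. r * y i \<le> (\<Sum>j<n. A $$ (i,j) * y j)"
  shows "rho A = r \<longleftrightarrow> (\<forall>i<n. (\<Sum>j<n. A $$ (i,j) * y j) = r * y i)"
proof
  assume "rho A = r"
  then have "strict_rows A n r y = {}"
    using rho_gt_of_subinvariant[OF A n nonneg irr y sub] by auto
  show "\<forall>i<n. (\<Sum>j<n. A $$ (i,j) * y j) = r * y i"
  proof (intro allI impI)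
    fix i assume "i < n"
    then have "i \<notin> strict_rows A n r y" using \<open>strict_rows A n r y = {}\<close> by simp
    then show "(\<Sum>j<n. A $$ (i,j) * y j) = r * y i"
      using sub \<open>i < n\<close> unfolding strict_rows_def by fastforce
  qed
next
  assume "\<forall>i<n. (\<Sum>j<n. A $$ (i,j) * y j) = r * y i"
  then show "rho A = r"
    using rho_le_of_superinvariant[OF A n nonneg y] rho_ge_of_subinvariant[OF A n nonneg y sub]
    by (simp add: antisym)
qed

lemma antitone_zero_tail_iff:
  fixes d :: "nat \<Rightarrow> 'a::{linorder,zero}"
  assumes nonneg: "\<forall>k<n. 0 \<le> d k" and antitone: "\<forall>j k. j \<le> k \<and> k < n \<longrightarrow> d k \<le> d j"
    and last: "d (n - 1) = 0"
  shows "(\<forall>j<n. d j = 0 \<or> Q j) \<longleftrightarrow>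
    (\<forall>j<n. d j = 0) \<or> (\<exists>t. 2 \<le> t \<and> t \<le> n \<and> (\<forall>j<t-1. Q j) \<and> (\<forall>k. t-1 \<le> k \<and> k < n \<longrightarrow> d k = 0))"
proof
  assume zero_or_Q: "\<forall>j<n. d j = 0 \<or> Q j"
  show "(\<forall>j<n. d j = 0) \<or> (\<exists>t. 2 \<le> t \<and> t \<le> n \<and> (\<forall>j<t-1. Q j) \<and> (\<forall>k. t-1 \<le> k \<and> k < n \<longrightarrow> d k = 0))"
  proof (cases "\<forall>j<n. d j = 0")
    case True
    then show ?thesis by blast
  next
    case not_zero: False
    define s where "s = (LEAST k. d k = 0)"
    have "s \<le> n - 1" unfolding s_def using last by (rule Least_le)
    have below: "d j \<noteq> 0" if "j < s" for j using not_less_Least[of j] that unfolding s_def by blast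
    have tail: "d k = 0" if "s \<le> k" "k < n" for k
    proof -
      have "d s = 0" unfolding s_def using last by (rule LeastI)
      then show ?thesis using antitone nonneg that by (metis order_antisym)
    qed
    then have "0 < s" using not_zero by (metis not_gr0 zero_le)
    have "n \<noteq> 0" using not_zero by auto
    have "\<exists>t. 2 \<le> t \<and> t \<le> n \<and> (\<forall>j<t-1. Q j) \<and> (\<forall>k. t-1 \<le> k \<and> k < n \<longrightarrow> d k = 0)"
    proof (intro exI[of _ "Suc s"] conjI allI impI)
      show "2 \<le> Suc s" "Suc s \<le> n" using \<open>0 < s\<close> \<open>s \<le> n - 1\<close> \<open>n \<noteq> 0\<close> by auto
    next
      fix j assume "j < Suc s - 1"
      then have "j < s" "j < n" using \<open>s \<le> n - 1\<close> \<open>n \<noteq> 0\<close> by auto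
      then show "Q j" using zero_or_Q below by blast
    next
      fix k assume "Suc s - 1 \<le> k \<and> k < n"
      then show "d k = 0" using tail by simp
    qed
    then show ?thesis by blast
  qed
next
  assume "(\<forall>j<n. d j = 0) \<or> (\<exists>t. 2 \<le> t \<and> t \<le> n \<and> (\<forall>j<t-1. Q j) \<and> (\<forall>k. t-1 \<le> k \<and> k < n \<longrightarrow> d k = 0))"
  then show "\<forall>j<n. d j = 0 \<or> Q j" by (metis not_le)
qed

locale ordered_weighted_row_sums =
  fixes A :: "real mat" and c :: "nat \<Rightarrow> real" and n :: nat
  assumes two_le_n: "2 \<le> n" and carrier: "A \<in> carrier_mat n n" and nonneg: "nonneg_mat A"
    and c_pos: "\<forall>i<n. 0 < c i"
    and Mrow_antitone: "\<forall>i j. i \<le> j \<and> j < n \<longrightarrow> Mrow A c j \<le> Mrow A c i"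
begin

abbreviation "M \<equiv> Mrow A c"
abbreviation "S \<equiv> Sdiag A"
abbreviation "T \<equiv> Toff A c"

definition scaled_entry :: "nat \<Rightarrow> nat \<Rightarrow> real" where
  "scaled_entry i j = A $$ (i,j) * c j / c i"

definition gap :: "nat \<Rightarrow> real" where
  "gap k = M k - M (n - 1)"

definition bound :: real where
  "bound = (M (n-1) + S - T + sqrt ((M (n-1) - S + T)\<^sup>2 + 4 * T * (\<Sum>k < n-1. M k - M (n-1)))) / 2"

definition test_vec :: "nat \<Rightarrow> real" where
  "test_vec j = c j * (bound - S + T + gap j)"

definition slack :: "nat \<Rightarrow> real" where
  "slack i = (\<Sum>j<n. (scaled_entry i j - (if j = i then S else T)) * gap j)"

definition tight_col :: "nat \<Rightarrow> bool" where
  "tight_col j \<longleftrightarrow> A $$ (j,j) = S \<and> (\<forall>k<n. k \<noteq> j \<longrightarrow> scaled_entry k j = T)"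

lemma c_nonzero: "i < n \<Longrightarrow> c i \<noteq> 0"
  using c_pos by fastforce

lemma Mrow_eq_sum_scaled_entry: "i < n \<Longrightarrow> M i = (\<Sum>j<n. scaled_entry i j)"
  using carrier by (simp add: Mrow_def scaled_entry_def sum_divide_distrib)

lemma sum_row_mult_c: "i < n \<Longrightarrow> (\<Sum>j<n. A $$ (i,j) * c j) = M i * c i"
  using carrier c_nonzero by (simp add: Mrow_def)

lemma scaled_entry_nonneg: "i < n \<Longrightarrow> j < n \<Longrightarrow> 0 \<le> scaled_entry i j"
  using nonneg_matD[OF carrier nonneg] c_pos by (simp add: scaled_entry_def less_imp_le)

lemma scaled_entry_diag: "i < n \<Longrightarrow> scaled_entry i i = A $$ (i,i)"
  using c_nonzero by (simp add: scaled_entry_def)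

lemma Sdiag_le:
  assumes "i < n"
  shows "S \<le> A $$ (i,i)"
  unfolding Sdiag_def by (rule Min_le) (use carrier assms in auto)

lemma Toff_eq_Min: "T = Min {scaled_entry i j | i j. i < n \<and> j < n \<and> i \<noteq> j}"
  using carrier unfolding Toff_def scaled_entry_def by simp

lemma finite_scaled_off_diagonal: "finite {scaled_entry i j | i j. i < n \<and> j < n \<and> i \<noteq> j}"
  by (rule finite_subset[OF _ finite_image_set2[of "\<lambda>i. i < n" "\<lambda>j. j < n" scaled_entry]])
    (blast, simp_all)

lemma Toff_le:
  assumes "i < n" "j < n" "i \<noteq> j"
  shows "T \<le> scaled_entry i j"
  unfolding Toff_eq_Min by (rule Min_le[OF finite_scaled_off_diagonal]) (use assms in auto)

lemma Toff_nonneg: "0 \<le> T"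
proof -
  have "0 < n" "1 < n" using two_le_n by auto
  then have "scaled_entry 0 1 \<in> {scaled_entry i j | i j. i < n \<and> j < n \<and> i \<noteq> j}"
    unfolding mem_Collect_eq by (intro exI[of _ 0] exI[of _ 1]) simp
  then have "T \<in> {scaled_entry i j | i j. i < n \<and> j < n \<and> i \<noteq> j}"
    unfolding Toff_eq_Min by (intro Min_in[OF finite_scaled_off_diagonal]) blast
  then obtain i j where "T = scaled_entry i j" "i < n" "j < n" by blast
  then show ?thesis using scaled_entry_nonneg by simp
qed

lemma gap_nonneg: "k < n \<Longrightarrow> 0 \<le> gap k"
  using Mrow_antitone by (simp add: gap_def)

lemma gap_antitone: "\<forall>j k. j \<le> k \<and> k < n \<longrightarrow> gap k \<le> gap j"
  using Mrow_antitone by (simp add: gap_def)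

lemma gap_last: "gap (n - 1) = 0"
  by (simp add: gap_def)

lemma gap_eq_0_iff: "(\<forall>k<n. gap k = 0) \<longleftrightarrow> (\<forall>i<n. M i = M 0)"
proof -
  have "0 < n" "n - 1 < n" using two_le_n by auto
  then show ?thesis unfolding gap_def by (metis eq_iff_diff_eq_0)
qed

lemma Sdiag_Toff_le_Mrow:
  assumes "i < n"
  shows "S + T \<le> M i"
proof -
  define j :: nat where "j = (if i = 0 then 1 else 0)"
  have "j < n" "j \<noteq> i" using two_le_n unfolding j_def by auto
  have "(\<Sum>l\<in>{i,j}. scaled_entry i l) \<le> (\<Sum>l<n. scaled_entry i l)"
    using assms \<open>j < n\<close> scaled_entry_nonneg by (intro sum_mono2) auto
  then show ?thesis
    using Sdiag_le[OF assms] Toff_le[OF assms \<open>j < n\<close>] \<open>j \<noteq> i\<close> assms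
    by (simp add: Mrow_eq_sum_scaled_entry scaled_entry_diag)
qed

lemma sum_gap: "(\<Sum>k<n. gap k) = (\<Sum>k<n-1. M k - M (n-1))"
proof -
  have "n = Suc (n - 1)" using two_le_n by simp
  then have "(\<Sum>k<n. gap k) = (\<Sum>k<n-1. gap k) + gap (n - 1)" by (metis sum.lessThan_Suc)
  then show ?thesis by (simp add: gap_def)
qed

lemma sum_gap_nonneg: "0 \<le> (\<Sum>k<n. gap k)"
  by (rule sum_nonneg) (simp add: gap_nonneg)

lemma bound_eq:
  defines "p \<equiv> M (n-1) - S + T" and "q \<equiv> (M (n-1) - S + T)\<^sup>2 + 4 * T * (\<Sum>k<n. gap k)"
  shows "bound - S + T = (p + sqrt q) / 2" and "bound - M (n-1) = (sqrt q - p) / 2"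
    and "p \<le> sqrt q" and "sqrt q * sqrt q = q" and "2 * T \<le> p"
proof -
  show "bound - S + T = (p + sqrt q) / 2" "bound - M (n-1) = (sqrt q - p) / 2"
    unfolding bound_def p_def q_def sum_gap by (simp_all add: field_simps)
  have "0 \<le> 4 * T * (\<Sum>k<n. gap k)" using Toff_nonneg sum_gap_nonneg by simp
  then show "p \<le> sqrt q" "sqrt q * sqrt q = q"
    unfolding p_def q_def by (simp_all add: real_le_rsqrt add_nonneg_nonneg)
  show "2 * T \<le> p" using Sdiag_Toff_le_Mrow[of "n - 1"] two_le_n unfolding p_def by simp
qed

lemma bound_shift_ge: "2 * T \<le> bound - S + T"
  using bound_eq(1,3,5) by (simp add: field_simps)

lemma bound_quadratic: "(bound - S + T) * (bound - M (n-1)) = T * (\<Sum>k<n. gap k)"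
proof -
  let ?p = "M (n-1) - S + T"
  let ?s = "sqrt (?p\<^sup>2 + 4 * T * (\<Sum>k<n. gap k))"
  have "(bound - S + T) * (bound - M (n-1)) = (?p + ?s) * (?s - ?p) / 4"
    unfolding bound_eq(1,2) by simp
  also have "\<dots> = (?s * ?s - ?p\<^sup>2) / 4" by (simp add: algebra_simps power2_eq_square)
  also have "\<dots> = T * (\<Sum>k<n. gap k)" unfolding bound_eq(4) by simp
  finally show ?thesis .
qed

lemma bound_Toff_zero: "T = 0 \<Longrightarrow> bound = M (n-1)"
  using Sdiag_Toff_le_Mrow[of "n - 1"] two_le_n unfolding bound_def by simp

lemma test_vec_pos: "0 < T \<Longrightarrow> j < n \<Longrightarrow> 0 < test_vec j"
  using bound_shift_ge gap_nonneg[of j] c_pos unfolding test_vec_def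
  by (simp add: add_pos_nonneg)

lemma slack_term_nonneg:
  assumes "i < n" "j < n"
  shows "0 \<le> (scaled_entry i j - (if j = i then S else T)) * gap j"
  using assms Sdiag_le Toff_le scaled_entry_diag gap_nonneg by (cases "j = i") auto

lemma slack_nonneg: "i < n \<Longrightarrow> 0 \<le> slack i"
  unfolding slack_def by (rule sum_nonneg) (simp add: slack_term_nonneg)

lemma test_vec_residual:
  assumes i: "i < n"
  shows "(\<Sum>j<n. A $$ (i,j) * test_vec j) = bound * test_vec i + c i * slack i"
proof -
  define a where "a = bound - S + T"
  define W where "W = (\<Sum>j<n. scaled_entry i j * gap j)"
  define G where "G = (\<Sum>j<n. gap j)"
  have "(\<Sum>j<n. A $$ (i,j) * test_vec j) = c i * (\<Sum>j<n. scaled_entry i j * (a + gap j))"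
    unfolding test_vec_def scaled_entry_def a_def sum_distrib_left using c_nonzero[OF i]
    by (intro sum.cong) auto
  also have "(\<Sum>j<n. scaled_entry i j * (a + gap j)) = a * M i + W"
    unfolding Mrow_eq_sum_scaled_entry[OF i] W_def
    by (simp add: algebra_simps sum.distrib sum_distrib_left)
  finally have lhs: "(\<Sum>j<n. A $$ (i,j) * test_vec j) = c i * (a * M i + W)" .
  have "(\<Sum>j<n. (if j = i then S else T) * gap j)
      = (\<Sum>j<n. T * gap j + (if j = i then (S - T) * gap j else 0))"
    by (intro sum.cong) (auto simp: algebra_simps)
  also have "\<dots> = T * G + (S - T) * gap i"
    using i by (simp add: sum.distrib sum_distrib_left G_def)
  finally have "slack i = W - T * G - (S - T) * gap i"
    unfolding slack_def W_def by (simp add: left_diff_distrib sum_subtractf)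
  moreover have "a * (bound - M (n-1)) = T * G" using bound_quadratic unfolding a_def G_def .
  moreover have "M i = M (n-1) + gap i" by (simp add: gap_def)
  ultimately have "a * M i + W = bound * (a + gap i) + slack i"
    unfolding a_def by (simp add: algebra_simps)
  then have "c i * (a * M i + W) = c i * (bound * (a + gap i) + slack i)" by (rule arg_cong)
  then show ?thesis
    unfolding lhs test_vec_def[of i] a_def[symmetric] by (simp add: algebra_simps)
qed

lemma Mrow_last_subinvariant: "\<forall>i<n. M (n-1) * c i \<le> (\<Sum>j<n. A $$ (i,j) * c j)"
  using Mrow_antitone c_pos by (simp add: sum_row_mult_c mult_right_mono less_imp_le)

lemma test_vec_subinvariant: "\<forall>i<n. bound * test_vec i \<le> (\<Sum>j<n. A $$ (i,j) * test_vec j)"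
  using test_vec_residual slack_nonneg c_pos by (simp add: less_imp_le)

lemma slack_eq_0_iff:
  assumes "i < n"
  shows "slack i = 0 \<longleftrightarrow> (\<forall>j<n. gap j = 0 \<or> scaled_entry i j = (if j = i then S else T))"
  unfolding slack_def using assms slack_term_nonneg by (subst sum_nonneg_eq_0_iff) auto

lemma all_slack_eq_0_iff: "(\<forall>i<n. slack i = 0) \<longleftrightarrow> (\<forall>j<n. gap j = 0 \<or> tight_col j)"
  using slack_eq_0_iff scaled_entry_diag unfolding tight_col_def by (auto 4 3)

theorem bound_le_rho: "bound \<le> rho A"
proof (cases "T = 0")
  case True
  then show ?thesis
    using rho_ge_of_subinvariant[OF carrier _ nonneg c_pos Mrow_last_subinvariant] two_le_n
    by (simp add: bound_Toff_zero)
next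
  case False
  then have "0 < T" using Toff_nonneg by simp
  then show ?thesis
    using rho_ge_of_subinvariant[OF carrier _ nonneg _ test_vec_subinvariant] test_vec_pos two_le_n
    by simp
qed

theorem rho_eq_bound_iff:
  assumes irr: "irreducible_mat A"
  shows "rho A = bound \<longleftrightarrow> ((\<forall>i<n. M i = M 0) \<or> (0 < T \<and>
    (\<exists>t. 2 \<le> t \<and> t \<le> n \<and> (\<forall>k<t-1. A $$ (k,k) = S)
       \<and> (\<forall>k<n. \<forall>l<t-1. k \<noteq> l \<longrightarrow> A $$ (k,l) * c l / c k = T)
       \<and> (\<forall>k. t-1 \<le> k \<and> k < n \<longrightarrow> M k = M (n-1)))))"
proof (cases "T = 0")
  case True
  have "rho A = bound \<longleftrightarrow> (\<forall>i<n. (\<Sum>j<n. A $$ (i,j) * c j) = M (n-1) * c i)"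
    using rho_eq_iff_invariant[OF carrier _ nonneg irr c_pos Mrow_last_subinvariant] two_le_n
    by (simp add: bound_Toff_zero[OF True])
  also have "\<dots> \<longleftrightarrow> (\<forall>k<n. gap k = 0)"
    using c_nonzero by (simp add: sum_row_mult_c gap_def)
  finally show ?thesis using True gap_eq_0_iff by simp
next
  case False
  then have "0 < T" using Toff_nonneg by simp
  have "rho A = bound \<longleftrightarrow> (\<forall>i<n. (\<Sum>j<n. A $$ (i,j) * test_vec j) = bound * test_vec i)"
    using rho_eq_iff_invariant[OF carrier _ nonneg irr _ test_vec_subinvariant]
      test_vec_pos[OF \<open>0 < T\<close>] two_le_n by simp
  also have "\<dots> \<longleftrightarrow> (\<forall>j<n. gap j = 0 \<or> tight_col j)"
    using c_nonzero by (simp add: test_vec_residual flip: all_slack_eq_0_iff)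
  also have "\<dots> \<longleftrightarrow> (\<forall>j<n. gap j = 0) \<or> (\<exists>t. 2 \<le> t \<and> t \<le> n \<and> (\<forall>j<t-1. tight_col j)
      \<and> (\<forall>k. t-1 \<le> k \<and> k < n \<longrightarrow> gap k = 0))"
    using gap_nonneg gap_antitone gap_last by (intro antitone_zero_tail_iff) auto
  finally show ?thesis
    using \<open>0 < T\<close> unfolding gap_eq_0_iff tight_col_def scaled_entry_def
    by (simp add: gap_def) blast
qed

end

theorem theorem2:
  fixes A :: "real mat" and c :: "nat \<Rightarrow> real" and n :: nat
  assumes "n \<ge> 2"
    and "A \<in> carrier_mat n n"
    and "nonneg_mat A"
    and "irreducible_mat A"
    and "\<forall>i < n. c i > 0"
    and "\<forall>i j. i \<le> j \<and> j < n \<longrightarrow> Mrow A c j \<le> Mrow A c i"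
  shows "(rho A \<ge> (Mrow A c (n-1) + Sdiag A - Toff A c
            + sqrt ((Mrow A c (n-1) - Sdiag A + Toff A c)\<^sup>2
                    + 4 * Toff A c * (\<Sum>k < n-1. Mrow A c k - Mrow A c (n-1)))) / 2)
     \<and> (rho A = (Mrow A c (n-1) + Sdiag A - Toff A c
            + sqrt ((Mrow A c (n-1) - Sdiag A + Toff A c)\<^sup>2
                    + 4 * Toff A c * (\<Sum>k < n-1. Mrow A c k - Mrow A c (n-1)))) / 2
         \<longleftrightarrow> ((\<forall>i < n. Mrow A c i = Mrow A c 0)
              \<or> (Toff A c > 0 \<and>
                 (\<exists>t. 2 \<le> t \<and> t \<le> n
                    \<and> (\<forall>k < t-1. A $$ (k,k) = Sdiag A)
                    \<and> (\<forall>k < n. \<forall>l < t-1. k \<noteq> l \<longrightarrow> A $$ (k,l) * c l / c k = Toff A c)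
                    \<and> (\<forall>k. t-1 \<le> k \<and> k < n \<longrightarrow> Mrow A c k = Mrow A c (n-1))))))"
proof -
  interpret ordered_weighted_row_sums A c n
    using assms(1,2,3,5,6) by unfold_locales
  show ?thesis
    using bound_le_rho rho_eq_bound_iff[OF assms(4)] unfolding bound_def by blast
qed

end
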